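(* Let $\mathbf a=(a_1,\ldots,a_n)\in\mathbb Z_{\geq1}^n$ and $\mathbf b=(b_1,\ldots,b_m)\in\mathbb Z_{\geq1}^m$. If $(\mathbf x,\mathbf y)$, with $\mathbf x=(x_1,\ldots,x_n)$ and $\mathbf y=(y_1,\ldots,y_m)$, is a minimal solution of the equation $x_1a_1+\cdots+x_na_n=y_1b_1+\cdots+y_mb_m$, then there exist rational numbers $\lambda_{i,j}$ ($1\leq i\leq n$, $1\leq j\leq m$) such that $\sum_{j=1}^m \lambda_{i,j} b_j=x_i$ for $1\leq i\leq n$; $\sum_{i=1}^n \lambda_{i,j} a_i=y_j$ for $1\leq j\leq m$; $\sum_{i=1}^n\sum_{j=1}^m\lambda_{i,j}\leq 1$; and $\lambda_{i,j}\geq 0$ for all $1\leq i\leq n$, $1\leq j\leq m$.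
   Context: $\mathcal S(\mathbf a,\mathbf b)$ denotes the set of all pairs $(\mathbf x,\mathbf y)\in\mathbb Z_{\geq0}^n\times\mathbb Z_{\geq0}^m$ satisfying $\sum_i x_ia_i=\sum_j y_jb_j$. A solution in $\mathcal S(\mathbf a,\mathbf b)$ is called minimal if it is nonzero and cannot be written as the sum of two nonzero solutions in $\mathcal S(\mathbf a,\mathbf b)$; the set of minimal solutions is denoted $\mathcal H(\mathbf a,\mathbf b)$ (the Hilbert basis of the cone $\{(\mathbf x,\mathbf y)\in\mathbb R_{\geq0}^{n+m}:\mathbf a\cdot\mathbf x=\mathbf b\cdot\mathbf y\}$). *)

theory Defs
  imports Complex_Main
begin

text \<open>Vectors in Z_{>=0}^n are represented as functions nat => nat with indices 0..n-1
  (0-based), and required to vanish outside the index range.\<close>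

definition in_S :: "nat \<Rightarrow> nat \<Rightarrow> (nat \<Rightarrow> nat) \<Rightarrow> (nat \<Rightarrow> nat) \<Rightarrow> (nat \<Rightarrow> nat) \<Rightarrow> (nat \<Rightarrow> nat) \<Rightarrow> bool" where
  "in_S n m a b x y \<longleftrightarrow> (\<forall>i\<ge>n. x i = 0) \<and> (\<forall>j\<ge>m. y j = 0) \<and>
     (\<Sum>i<n. x i * a i) = (\<Sum>j<m. y j * b j)"

definition minimal_sol :: "nat \<Rightarrow> nat \<Rightarrow> (nat \<Rightarrow> nat) \<Rightarrow> (nat \<Rightarrow> nat) \<Rightarrow> (nat \<Rightarrow> nat) \<Rightarrow> (nat \<Rightarrow> nat) \<Rightarrow> bool" where
  "minimal_sol n m a b x y \<longleftrightarrow> in_S n m a b x y \<and> (x, y) \<noteq> ((\<lambda>_. 0), (\<lambda>_. 0)) \<and>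
     \<not> (\<exists>x1 y1 x2 y2. in_S n m a b x1 y1 \<and> in_S n m a b x2 y2 \<and>
          (x1, y1) \<noteq> ((\<lambda>_. 0), (\<lambda>_. 0)) \<and> (x2, y2) \<noteq> ((\<lambda>_. 0), (\<lambda>_. 0)) \<and>
          (\<forall>i. x i = x1 i + x2 i) \<and> (\<forall>j. y j = y1 j + y2 j))"

end

theory Submission
  imports Defs
begin

(* Induction on the weight sum_i x_i a_i of the minimal solution (x, y). Choose i in the support
   of x with a_i maximal and j in the support of y with b_j maximal. If a_i = b_j, minimality
   forces (x, y) = (e_i, e_j). Otherwise, up to exchanging the two sides, a_i < b_j: adjoining a new
   coefficient b_m = b_j - a_i turns (x - e_i, y - e_j + e_m) into a minimal solution of smaller
   weight. A plan for it is folded back by moving column m into column j with the factor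
   (b_j - a_i)/b_j and adding mass 1/b_j at (i, j). The total mass does not grow because column m
   satisfies sum_k lam_km a_k = 1 and is supported where a_k <= a_i. *)

(* lam exhibits (x, y) = sum_ij lam_ij (b_j e_i, a_i e_j) as a point of the convex hull of 0 and
   the generators (b_j e_i, a_i e_j) of the extreme rays of the solution cone. *)
definition is_generator_plan ::
  "nat \<Rightarrow> nat \<Rightarrow> (nat \<Rightarrow> nat) \<Rightarrow> (nat \<Rightarrow> nat) \<Rightarrow> (nat \<Rightarrow> nat) \<Rightarrow> (nat \<Rightarrow> nat) \<Rightarrow>
    (nat \<Rightarrow> nat \<Rightarrow> rat) \<Rightarrow> bool"
  where "is_generator_plan n m a b x y lam \<longleftrightarrow>
    (\<forall>i<n. (\<Sum>j<m. lam i j * of_nat (b j)) = of_nat (x i)) \<and>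
    (\<forall>j<m. (\<Sum>i<n. lam i j * of_nat (a i)) = of_nat (y j)) \<and>
    (\<Sum>i<n. \<Sum>j<m. lam i j) \<le> 1 \<and>
    (\<forall>i<n. \<forall>j<m. lam i j \<ge> 0)"

lemma in_S_swap: "in_S n m a b x y \<longleftrightarrow> in_S m n b a y x"
  by (auto simp: in_S_def)

lemma minimal_sol_swap: "minimal_sol n m a b x y \<Longrightarrow> minimal_sol m n b a y x"
  unfolding minimal_sol_def in_S_swap[of n m a b] by auto

lemma is_generator_plan_swap:
  "is_generator_plan m n b a y x lam \<Longrightarrow> is_generator_plan n m a b x y (\<lambda>i j. lam j i)"
  by (simp add: is_generator_plan_def sum.swap[of _ "{..<n}"])

lemma weighted_sum_fun_upd_Suc:
  fixes f c :: "'a \<Rightarrow> 'b :: comm_semiring_1_cancel"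
  assumes "finite A" "i \<in> A"
  shows "(\<Sum>k\<in>A. (f(i := f i + 1)) k * c k) = (\<Sum>k\<in>A. f k * c k) + c i"
proof -
  have "(\<Sum>k\<in>A. (f(i := f i + 1)) k * c k) = (f i + 1) * c i + (\<Sum>k\<in>A - {i}. f k * c k)"
    using assms by (simp add: sum.remove)
  moreover have "(\<Sum>k\<in>A. f k * c k) = f i * c i + (\<Sum>k\<in>A - {i}. f k * c k)"
    using assms by (simp add: sum.remove)
  ultimately show ?thesis by (simp add: algebra_simps)
qed

lemma weighted_sum_fun_upd_pred:
  fixes f c :: "'a \<Rightarrow> nat"
  assumes "finite A" "i \<in> A" "0 < f i"
  shows "(\<Sum>k\<in>A. f k * c k) = (\<Sum>k\<in>A. (f(i := f i - 1)) k * c k) + c i"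
  using weighted_sum_fun_upd_Suc[OF assms(1,2), of "f(i := f i - 1)" c] assms(3) by simp

lemma sum_delta_times:
  fixes f :: "'b \<Rightarrow> 'a :: comm_semiring_1"
  shows "finite A \<Longrightarrow> (\<Sum>k\<in>A. (if k = i then c else 0) * f k) = (if i \<in> A then c * f i else 0)"
  by (simp add: if_distrib[of "\<lambda>u. u * _"] cong: if_cong)

lemma weighted_sum_le_max_times_sum:
  fixes \<mu> :: "'a \<Rightarrow> 'b :: linordered_semiring"
  assumes "\<forall>k\<in>K. 0 \<le> \<mu> k" and "\<forall>k\<in>K. \<mu> k \<noteq> 0 \<longrightarrow> f k \<le> M"
  shows "(\<Sum>k\<in>K. \<mu> k * f k) \<le> (\<Sum>k\<in>K. \<mu> k) * M"
  unfolding sum_distrib_right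
  by (rule sum_mono) (use assms in \<open>metis mult_left_mono mult_zero_left order_refl\<close>)

lemma ex_greatest_on_support:
  fixes f :: "nat \<Rightarrow> nat"
  assumes "\<exists>k<n. P k"
  shows "\<exists>i<n. P i \<and> (\<forall>k<n. P k \<longrightarrow> f k \<le> f i)"
proof -
  obtain k where "k < n \<and> P k" using assms by blast
  moreover have "\<forall>k'. k' < n \<and> P k' \<longrightarrow> f k' < Suc (Max (f ` {..<n}))"
    by (simp add: le_imp_less_Suc)
  ultimately show ?thesis using ex_has_greatest_nat[of "\<lambda>k. k < n \<and> P k" k f] by blast
qed

lemma in_S_nonzero_support:
  assumes b_pos: "\<forall>l<m. 1 \<le> b l" and S: "in_S n m a b x y"
    and nonzero: "(x, y) \<noteq> ((\<lambda>_. 0), (\<lambda>_. 0))"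
  shows "\<exists>k<n. 0 < x k"
proof (rule ccontr)
  assume "\<not> (\<exists>k<n. 0 < x k)"
  then have "x = (\<lambda>_. 0)" using S by (auto simp: in_S_def fun_eq_iff not_less)
  then have "(\<Sum>l<m. y l * b l) = 0" using S by (simp add: in_S_def)
  then have "y l = 0" for l
    using b_pos S by (cases "l < m") (force simp: in_S_def)+
  then have "y = (\<lambda>_. 0)" by auto
  with \<open>x = _\<close> nonzero show False by simp
qed

lemma folded_column:
  fixes \<mu> f :: "'a \<Rightarrow> 'b :: linordered_field"
  assumes K: "finite K" "i \<in> K" and f_i: "0 \<le> f i" "f i < B"
    and \<mu>_nonneg: "\<forall>k\<in>K. 0 \<le> \<mu> k"
    and \<mu>_support: "\<forall>k\<in>K. \<mu> k \<noteq> 0 \<longrightarrow> f k \<le> f i"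
    and \<mu>_weight: "(\<Sum>k\<in>K. \<mu> k * f k) = 1"
  defines "c \<equiv> \<lambda>k. (\<mu> k * (B - f i) + (if k = i then 1 else 0)) / B"
  shows "(\<Sum>k\<in>K. c k * f k) = 1" and "(\<Sum>k\<in>K. c k) \<le> (\<Sum>k\<in>K. \<mu> k)"
proof -
  have B_pos: "0 < B" using f_i by linarith
  have "c k * f k = (B - f i) / B * (\<mu> k * f k) + (if k = i then f i / B else 0)" for k
    using B_pos by (simp add: c_def field_simps)
  then have "(\<Sum>k\<in>K. c k * f k) = (B - f i) / B * (\<Sum>k\<in>K. \<mu> k * f k) + f i / B"
    using K by (simp add: sum.distrib sum_distrib_left)
  then show "(\<Sum>k\<in>K. c k * f k) = 1" using \<mu>_weight B_pos by (simp add: field_simps)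
  have "1 \<le> (\<Sum>k\<in>K. \<mu> k) * f i"
    using weighted_sum_le_max_times_sum[OF \<mu>_nonneg \<mu>_support] \<mu>_weight by simp
  moreover have "B * (\<Sum>k\<in>K. c k) = (\<Sum>k\<in>K. \<mu> k) * (B - f i) + 1"
    using K B_pos
    by (simp add: c_def sum_divide_distrib[symmetric] sum.distrib sum_distrib_right)
  ultimately have "B * (\<Sum>k\<in>K. c k) \<le> B * (\<Sum>k\<in>K. \<mu> k)"
    by (simp add: algebra_simps)
  then show "(\<Sum>k\<in>K. c k) \<le> (\<Sum>k\<in>K. \<mu> k)" using B_pos by simp
qed

lemma in_S_split:
  assumes S: "in_S n m a b x y" and ij: "i < n" "0 < x i" "j < m" "0 < y j" "a i < b j"
  shows "in_S n (Suc m) a (b(m := b j - a i)) (x(i := x i - 1)) (y(j := y j - 1, m := 1))"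
proof -
  have "(\<Sum>l<m. (y(j := y j - 1, m := 1)) l * (b(m := b j - a i)) l)
      = (\<Sum>l<m. (y(j := y j - 1)) l * b l)"
    by (rule sum.cong) auto
  moreover have "(\<Sum>k<n. x k * a k) = (\<Sum>k<n. (x(i := x i - 1)) k * a k) + a i"
    using ij by (simp add: weighted_sum_fun_upd_pred)
  moreover have "(\<Sum>l<m. y l * b l) = (\<Sum>l<m. (y(j := y j - 1)) l * b l) + b j"
    using ij by (simp add: weighted_sum_fun_upd_pred)
  ultimately show ?thesis using S ij by (auto simp: in_S_def)
qed

lemma in_S_restrict:
  assumes S: "in_S n (Suc m) a (b(m := d)) x y" and "y m = 0"
  shows "in_S n m a b x y"
proof -
  have "(\<Sum>l<m. y l * (b(m := d)) l) = (\<Sum>l<m. y l * b l)" by (rule sum.cong) auto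
  moreover have "y l = 0" if "m \<le> l" for l
    using S \<open>y m = 0\<close> that by (cases "l = m") (auto simp: in_S_def)
  ultimately show ?thesis using S \<open>y m = 0\<close> by (simp add: in_S_def)
qed

lemma in_S_merge:
  assumes S: "in_S n (Suc m) a (b(m := b j - a i)) x y" "y m = 1"
    and ij: "i < n" "j < m" "a i < b j"
  shows "in_S n m a b (x(i := x i + 1)) (y(m := 0, j := y j + 1))"
proof -
  have "(\<Sum>l<m. y l * (b(m := b j - a i)) l) = (\<Sum>l<m. y l * b l)" by (rule sum.cong) auto
  then have "(\<Sum>k<n. x k * a k) = (\<Sum>l<m. y l * b l) + (b j - a i)"
    using S by (simp add: in_S_def)
  moreover have "(\<Sum>l<m. (y(m := 0, j := y j + 1)) l * b l)
      = (\<Sum>l<m. (y(j := y j + 1)) l * b l)"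
    by (rule sum.cong) auto
  ultimately have "(\<Sum>k<n. (x(i := x i + 1)) k * a k)
      = (\<Sum>l<m. (y(m := 0, j := y j + 1)) l * b l)"
    using ij by (simp only: weighted_sum_fun_upd_Suc finite_lessThan lessThan_iff)
  then show ?thesis using S ij by (auto simp: in_S_def)
qed

lemma minimal_sol_split:
  assumes min: "minimal_sol n m a b x y"
    and ij: "i < n" "0 < x i" "j < m" "0 < y j" "a i < b j"
  shows "minimal_sol n (Suc m) a (b(m := b j - a i)) (x(i := x i - 1)) (y(j := y j - 1, m := 1))"
    (is "minimal_sol n (Suc m) a ?b ?x ?y")
proof -
  have S: "in_S n m a b x y" using min by (simp add: minimal_sol_def)
  \<comment> \<open>the part carrying the new coordinate m is moved back to j, giving a decomposition of (x, y)\<close>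
  have no_split: False
    if S1: "in_S n (Suc m) a ?b x1 y1" and S2: "in_S n (Suc m) a ?b x2 y2"
      and nonzero2: "(x2, y2) \<noteq> ((\<lambda>_. 0), (\<lambda>_. 0))"
      and sum_x: "\<forall>k. ?x k = x1 k + x2 k" and sum_y: "\<forall>l. ?y l = y1 l + y2 l" and "y1 m = 1"
    for x1 y1 x2 y2
  proof -
    have "y2 m = 0" using sum_y \<open>y1 m = 1\<close> by (auto dest: spec[of _ m])
    have "y m = 0" using S by (simp add: in_S_def)
    have "in_S n m a b (x1(i := x1 i + 1)) (y1(m := 0, j := y1 j + 1))"
      using in_S_merge[OF S1 \<open>y1 m = 1\<close>] ij by simp
    moreover have "in_S n m a b x2 y2" using in_S_restrict[OF S2 \<open>y2 m = 0\<close>] .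
    moreover have "x k = (x1(i := x1 i + 1)) k + x2 k" for k
      using sum_x[rule_format, of k] ij by (cases "k = i") auto
    moreover have "y l = (y1(m := 0, j := y1 j + 1)) l + y2 l" for l
      using sum_y[rule_format, of l] ij \<open>y2 m = 0\<close> \<open>y m = 0\<close>
      by (cases "l = j"; cases "l = m") auto
    moreover have "(x1(i := x1 i + 1), y1(m := 0, j := y1 j + 1)) \<noteq> ((\<lambda>_. 0), (\<lambda>_. 0))"
      by (auto simp: fun_eq_iff)
    ultimately show False using min nonzero2 unfolding minimal_sol_def by blast
  qed
  have "\<not> (\<exists>x1 y1 x2 y2. in_S n (Suc m) a ?b x1 y1 \<and> in_S n (Suc m) a ?b x2 y2 \<and>
      (x1, y1) \<noteq> ((\<lambda>_. 0), (\<lambda>_. 0)) \<and> (x2, y2) \<noteq> ((\<lambda>_. 0), (\<lambda>_. 0)) \<and>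
      (\<forall>k. ?x k = x1 k + x2 k) \<and> (\<forall>l. ?y l = y1 l + y2 l))"
  proof (intro notI, elim exE conjE)
    fix x1 y1 x2 y2
    assume "in_S n (Suc m) a ?b x1 y1" "in_S n (Suc m) a ?b x2 y2"
      "(x1, y1) \<noteq> ((\<lambda>_. 0), (\<lambda>_. 0))" "(x2, y2) \<noteq> ((\<lambda>_. 0), (\<lambda>_. 0))"
      and sum_x: "\<forall>k. ?x k = x1 k + x2 k" and sum_y: "\<forall>l. ?y l = y1 l + y2 l"
    moreover have "y1 m = 1 \<or> y2 m = 1" using sum_y[rule_format, of m] by (simp; arith)
    ultimately show False using no_split[of x1 y1 x2 y2] no_split[of x2 y2 x1 y1]
      by (auto simp: add.commute)
  qed
  moreover have "(?x, ?y) \<noteq> ((\<lambda>_. 0), (\<lambda>_. 0))" by (auto simp: fun_eq_iff)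
  ultimately show ?thesis using in_S_split[OF S ij] by (simp add: minimal_sol_def)
qed

lemma minimal_sol_equal_coeffs:
  assumes min: "minimal_sol n m a b x y"
    and ij: "i < n" "0 < x i" "j < m" "0 < y j" "a i = b j"
  shows "x = (\<lambda>_. 0)(i := 1)" and "y = (\<lambda>_. 0)(j := 1)"
proof -
  have S: "in_S n m a b x y" using min by (simp add: minimal_sol_def)
  have unit: "in_S n m a b ((\<lambda>_. 0)(i := 1)) ((\<lambda>_. 0)(j := 1))"
    using ij by (simp add: in_S_def if_distrib[of "\<lambda>u. u * _"] cong: if_cong)
  have "in_S n m a b (x(i := x i - 1)) (y(j := y j - 1))"
    using S ij by (simp add: in_S_def weighted_sum_fun_upd_pred)
  moreover have "x k = ((\<lambda>_. 0)(i := 1)) k + (x(i := x i - 1)) k" for k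
    using ij by auto
  moreover have "y l = ((\<lambda>_. 0)(j := 1)) l + (y(j := y j - 1)) l" for l
    using ij by auto
  moreover have "((\<lambda>_. 0)(i := 1::nat), (\<lambda>_. 0)(j := 1::nat)) \<noteq> ((\<lambda>_. 0), (\<lambda>_. 0))"
    by (auto simp: fun_eq_iff)
  ultimately have "(x(i := x i - 1), y(j := y j - 1)) = ((\<lambda>_. 0), (\<lambda>_. 0))"
    using min unit unfolding minimal_sol_def by blast
  then show "x = (\<lambda>_. 0)(i := 1)" and "y = (\<lambda>_. 0)(j := 1)"
    using ij by (auto simp: fun_eq_iff split: if_splits)
qed

lemma is_generator_plan_unit:
  assumes ij: "i < n" "j < m" "a i = b j" "0 < b j"
  shows "is_generator_plan n m a b ((\<lambda>_. 0)(i := 1)) ((\<lambda>_. 0)(j := 1))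
           (\<lambda>k l. if k = i then if l = j then 1 / of_nat (b j) else 0 else 0)"
proof -
  have "(\<Sum>l<m. if k = i then if l = j then c else 0 else 0) = (if k = i then c else 0)"
    for k and c :: rat
    using ij by (cases "k = i") simp_all
  moreover have "(\<Sum>l<m. (if k = i then if l = j then c else 0 else 0) * of_nat (b l))
      = (if k = i then c * of_nat (b j) else 0)" for k and c :: rat
    using ij by (cases "k = i") (simp_all add: sum_delta_times)
  ultimately show ?thesis
    using ij by (simp add: is_generator_plan_def sum_delta_times)
qed

lemma is_generator_plan_unsplit:
  assumes ij: "i < n" "0 < x i" "j < m" "0 < y j" "a i < b j"
    and a_max: "\<forall>k<n. 0 < x k \<longrightarrow> a k \<le> a i"
    and plan: "is_generator_plan n (Suc m) a (b(m := b j - a i))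
      (x(i := x i - 1)) (y(j := y j - 1, m := 1)) lam"
  shows "\<exists>lam. is_generator_plan n m a b x y lam"
proof -
  define A B where "A = (of_nat (a i) :: rat)" and "B = (of_nat (b j) :: rat)"
  define c where "c k = (lam k m * (B - A) + (if k = i then 1 else 0)) / B" for k
  define lam\<^sub>0 where "lam\<^sub>0 k l = lam k l + (if l = j then c k else 0)" for k l
  have "A < B" using ij by (simp add: A_def B_def)
  then have B_pos: "0 < B" and D_pos: "0 < B - A" by (auto simp: A_def)
  have lam_nonneg: "\<forall>k<n. \<forall>l\<le>m. 0 \<le> lam k l"
    using plan by (simp add: is_generator_plan_def less_Suc_eq_le)
  have split_rows:
    "(\<Sum>l<m. lam k l * of_nat (b l)) + lam k m * (B - A) = of_nat ((x(i := x i - 1)) k)"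
    if "k < n" for k
  proof -
    have "(\<Sum>l<m. lam k l * of_nat ((b(m := b j - a i)) l)) = (\<Sum>l<m. lam k l * of_nat (b l))"
      by (rule sum.cong) auto
    then show ?thesis
      using plan that ij by (simp add: is_generator_plan_def A_def B_def of_nat_diff)
  qed
  have split_cols: "(\<Sum>k<n. lam k l * of_nat (a k)) = of_nat ((y(j := y j - 1, m := 1)) l)"
    if "l \<le> m" for l
    using plan that by (simp add: is_generator_plan_def less_Suc_eq_le)
  have support: "a k \<le> a i" if "k < n" "lam k m \<noteq> 0" for k
  proof -
    have "0 < lam k m * (B - A)" using lam_nonneg that D_pos by (simp add: order_le_neq_trans)
    moreover have "0 \<le> (\<Sum>l<m. lam k l * of_nat (b l))"
      using lam_nonneg that by (intro sum_nonneg) simp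
    ultimately have "0 < (x(i := x i - 1)) k" using split_rows[OF \<open>k < n\<close>] by linarith
    then show ?thesis using a_max that by (cases "k = i") auto
  qed
  have c_weight: "(\<Sum>k<n. c k * of_nat (a k)) = 1"
    and c_mass: "(\<Sum>k<n. c k) \<le> (\<Sum>k<n. lam k m)"
    using folded_column[of "{..<n}" i "\<lambda>k. of_nat (a k)" B "\<lambda>k. lam k m"]
      ij \<open>A < B\<close> lam_nonneg support split_cols[of m]
    unfolding c_def A_def by auto
  have rows: "(\<Sum>l<m. lam\<^sub>0 k l * of_nat (b l)) = of_nat (x k)" if "k < n" for k
  proof -
    have "(\<Sum>l<m. lam\<^sub>0 k l * of_nat (b l)) = (\<Sum>l<m. lam k l * of_nat (b l)) + c k * B"
      using ij by (simp add: lam\<^sub>0_def distrib_right sum.distrib sum_delta_times B_def)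
    also have "\<dots> = (\<Sum>l<m. lam k l * of_nat (b l)) + lam k m * (B - A)
        + (if k = i then 1 else 0)"
      using B_pos by (simp add: c_def field_simps)
    also have "\<dots> = of_nat (x k)"
      using split_rows[OF that] ij by (simp add: of_nat_diff)
    finally show ?thesis .
  qed
  have cols: "(\<Sum>k<n. lam\<^sub>0 k l * of_nat (a k)) = of_nat (y l)" if "l < m" for l
    using split_cols[of l] that ij c_weight
    by (simp add: lam\<^sub>0_def distrib_right sum.distrib of_nat_diff)
  have mass: "(\<Sum>k<n. \<Sum>l<m. lam\<^sub>0 k l) \<le> 1"
  proof -
    have "(\<Sum>k<n. \<Sum>l<m. lam\<^sub>0 k l) = (\<Sum>k<n. \<Sum>l<m. lam k l) + (\<Sum>k<n. c k)"
      using ij by (simp add: lam\<^sub>0_def sum.distrib)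
    also have "\<dots> \<le> (\<Sum>k<n. \<Sum>l<Suc m. lam k l)"
      using c_mass by (simp add: sum.distrib)
    also have "\<dots> \<le> 1" using plan by (simp add: is_generator_plan_def)
    finally show ?thesis .
  qed
  have "0 \<le> lam\<^sub>0 k l" if "k < n" "l < m" for k l
    using lam_nonneg that D_pos B_pos by (simp add: lam\<^sub>0_def c_def)
  then show ?thesis using rows cols mass unfolding is_generator_plan_def by blast
qed


lemma minimal_sol_has_generator_plan:
  assumes "\<forall>k<n. 1 \<le> a k" "\<forall>l<m. 1 \<le> b l" "minimal_sol n m a b x y"
  shows "\<exists>lam. is_generator_plan n m a b x y lam"
  using assms
proof (induction "\<Sum>k<n. x k * a k" arbitrary: n m a b x y rule: less_induct)
  case less
  note a_pos = less.prems(1) and b_pos = less.prems(2) and min = less.prems(3)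
  from min have S: "in_S n m a b x y" and nonzero: "(x, y) \<noteq> ((\<lambda>_. 0), (\<lambda>_. 0))"
    unfolding minimal_sol_def by blast+
  obtain i where i: "i < n" "0 < x i" and a_max: "\<forall>k<n. 0 < x k \<longrightarrow> a k \<le> a i"
    using ex_greatest_on_support[OF in_S_nonzero_support[OF b_pos S nonzero]] by blast
  have "(y, x) \<noteq> ((\<lambda>_. 0), (\<lambda>_. 0))" using nonzero by auto
  from ex_greatest_on_support[OF in_S_nonzero_support[OF a_pos in_S_swap[THEN iffD1, OF S] this]]
  obtain j where j: "j < m" "0 < y j" and b_max: "\<forall>l<m. 0 < y l \<longrightarrow> b l \<le> b j"
    by blast
  have weight_eq: "(\<Sum>k<n. x k * a k) = (\<Sum>l<m. y l * b l)" using S by (simp add: in_S_def)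
  consider "a i = b j" | "a i < b j" | "b j < a i" by linarith
  then show ?case
  proof cases
    case 1
    have "0 < b j" using b_pos j(1) by (simp add: Suc_le_eq)
    with is_generator_plan_unit[of i n j m a b] i(1) j(1) 1 show ?thesis
      unfolding minimal_sol_equal_coeffs[OF min i j 1] by blast
  next
    case 2
    have lighter: "(\<Sum>k<n. (x(i := x i - 1)) k * a k) < (\<Sum>k<n. x k * a k)"
      using weighted_sum_fun_upd_pred[of "{..<n}" i x a] i a_pos by (simp add: Suc_le_eq)
    have b'_pos: "\<forall>l<Suc m. 1 \<le> (b(m := b j - a i)) l"
      using b_pos 2 by (simp add: less_Suc_eq)
    from less.hyps[OF lighter a_pos b'_pos minimal_sol_split[OF min i j 2]]
    show ?thesis
      using is_generator_plan_unsplit[where a = a and b = b and x = x and y = y, OF i j 2 a_max]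
      by blast
  next
    case 3
    have lighter: "(\<Sum>l<m. (y(j := y j - 1)) l * b l) < (\<Sum>k<n. x k * a k)"
      using weighted_sum_fun_upd_pred[of "{..<m}" j y b] j b_pos weight_eq by (simp add: Suc_le_eq)
    have a'_pos: "\<forall>k<Suc n. 1 \<le> (a(n := a i - b j)) k"
      using a_pos 3 by (simp add: less_Suc_eq)
    from less.hyps[OF lighter b_pos a'_pos
        minimal_sol_split[OF minimal_sol_swap[OF min] j i 3]]
    obtain lam where "is_generator_plan m n b a y x lam"
      using is_generator_plan_unsplit[where a = b and b = a and x = y and y = x, OF j i 3 b_max]
      by blast
    from is_generator_plan_swap[OF this] show ?thesis by blast
  qed
qed

theorem theorem1:
  fixes n m :: nat and a b x y :: "nat \<Rightarrow> nat"
  assumes "\<forall>i<n. a i \<ge> 1" and "\<forall>j<m. b j \<ge> 1"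
    and "minimal_sol n m a b x y"
  shows "\<exists>lam :: nat \<Rightarrow> nat \<Rightarrow> rat.
    (\<forall>i<n. (\<Sum>j<m. lam i j * of_nat (b j)) = of_nat (x i)) \<and>
    (\<forall>j<m. (\<Sum>i<n. lam i j * of_nat (a i)) = of_nat (y j)) \<and>
    (\<Sum>i<n. \<Sum>j<m. lam i j) \<le> 1 \<and>
    (\<forall>i<n. \<forall>j<m. lam i j \<ge> 0)"
  using minimal_sol_has_generator_plan[OF assms] unfolding is_generator_plan_def .

end
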